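(* Let $\mathfrak h\subseteq\Phi^+$ be a Hessenberg set and let $H_T^*(\mathfrak h)$ be its GKM ring. Then $H_T^*(\mathfrak h)$ is stable under the action of $W$ on $\mathrm{Maps}(W,\mathbb R[\Delta])$ given by $(w\cdot\mathcal P)(u)=w\,\mathcal P(w^{-1}u)$ for $w,u\in W$, where on the right $w$ acts on the polynomial $\mathcal P(w^{-1}u)\in\mathbb R[\Delta]$. That is, if $\mathcal P\in H_T^*(\mathfrak h)$ and $w\in W$ then $w\cdot\mathcal P\in H_T^*(\mathfrak h)$.
   Context: Let $V$ be a finite-dimensional real vector space with a symmetric positive definite bilinear form $(\,,)$; for nonzero $\alpha\in V$ let $s_\alpha(v)=v-\frac{2(\alpha,v)}{(\alpha,\alpha)}\alpha$. Let $\Phi\subset V$ be a (crystallographic) root system with base $\Delta=\{\alpha_1,\dots,\alpha_k\}$, positive roots $\Phi^+$ and negative roots $\Phi^-=-\Phi^+$. Write $\alpha\prec\beta$ if $\beta-\alpha$ is a sum of positive roots. A Hessenberg set is a subset $\mathfrak h\subseteq\Phi^+$ whose complement $\Phi^+\setminus\mathfrak h$ is upward closed in $\Phi^+$ (if $\beta\in\Phi^+\setminus\mathfrak h$, $\alpha\in\Phi^+$ and $\beta\prec\alpha$, then $\alpha\in\Phi^+\setminus\mathfrak h$). $W$ is the Weyl group generated by the reflections $s_{\alpha_i}$; it acts linearly on $V$ and hence on the polynomial ring $\mathbb R[\Delta]=\mathbb R[\alpha_1,\dots,\alpha_k]$. The Hessenberg graph $\Gamma_{\mathfrak h}$ has vertex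 set $W$ and a directed edge $u\to w$ whenever $w=s_\alpha u$ with $\alpha\in\Phi^+$ and $w^{-1}\alpha\in-\mathfrak h$. The GKM ring is $H_T^*(\mathfrak h)=\{\mathcal P:W\to\mathbb R[\Delta] : \mathcal P(w)-\mathcal P(s_\alpha w)\in\langle\alpha\rangle \text{ for every edge } w\to s_\alpha w \text{ or } s_\alpha w\to w \text{ of }\Gamma_{\mathfrak h}\}$, where $\langle\alpha\rangle$ is the principal ideal generated by $\alpha$. *)

theory Defs
  imports "HOL-Analysis.Analysis"
begin

text \<open>V is a finite-dimensional real inner product space (type class euclidean_space);
  the bilinear form is the inner product.\<close>

definition refl :: "'a::euclidean_space \<Rightarrow> 'a \<Rightarrow> 'a" where
  "refl \<alpha> v = v - (2 * (\<alpha> \<bullet> v) / (\<alpha> \<bullet> \<alpha>)) *\<^sub>R \<alpha>"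

definition root_system :: "'a::euclidean_space set \<Rightarrow> bool" where
  "root_system \<Phi> \<longleftrightarrow> finite \<Phi> \<and> 0 \<notin> \<Phi> \<and> span \<Phi> = UNIV
     \<and> (\<forall>\<alpha>\<in>\<Phi>. refl \<alpha> ` \<Phi> = \<Phi>)
     \<and> (\<forall>\<alpha>\<in>\<Phi>. \<forall>\<beta>\<in>\<Phi>. 2 * (\<alpha> \<bullet> \<beta>) / (\<alpha> \<bullet> \<alpha>) \<in> \<int>)
     \<and> (\<forall>\<alpha>\<in>\<Phi>. \<forall>c::real. c *\<^sub>R \<alpha> \<in> \<Phi> \<longrightarrow> c = 1 \<or> c = -1)"

definition is_base :: "'a::euclidean_space set \<Rightarrow> 'a set \<Rightarrow> bool" where
  "is_base \<Phi> \<Delta> \<longleftrightarrow> \<Delta> \<subseteq> \<Phi> \<and> independent \<Delta> \<and>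
     (\<forall>\<beta>\<in>\<Phi>. \<exists>c::'a \<Rightarrow> int. \<beta> = (\<Sum>\<alpha>\<in>\<Delta>. of_int (c \<alpha>) *\<^sub>R \<alpha>) \<and>
        ((\<forall>\<alpha>\<in>\<Delta>. c \<alpha> \<ge> 0) \<or> (\<forall>\<alpha>\<in>\<Delta>. c \<alpha> \<le> 0)))"

definition pos_roots :: "'a::euclidean_space set \<Rightarrow> 'a set \<Rightarrow> 'a set" where
  "pos_roots \<Phi> \<Delta> = {\<beta>\<in>\<Phi>. \<exists>c::'a \<Rightarrow> int. \<beta> = (\<Sum>\<alpha>\<in>\<Delta>. of_int (c \<alpha>) *\<^sub>R \<alpha>) \<and>
        (\<forall>\<alpha>\<in>\<Delta>. c \<alpha> \<ge> 0)}"

inductive_set pos_sums :: "'a::euclidean_space set \<Rightarrow> 'a set \<Rightarrow> 'a set" for \<Phi> \<Delta> where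
  base: "\<beta> \<in> pos_roots \<Phi> \<Delta> \<Longrightarrow> \<beta> \<in> pos_sums \<Phi> \<Delta>"
| add: "x \<in> pos_sums \<Phi> \<Delta> \<Longrightarrow> y \<in> pos_sums \<Phi> \<Delta> \<Longrightarrow> x + y \<in> pos_sums \<Phi> \<Delta>"

definition root_prec :: "'a::euclidean_space set \<Rightarrow> 'a set \<Rightarrow> 'a \<Rightarrow> 'a \<Rightarrow> bool" where
  "root_prec \<Phi> \<Delta> \<alpha> \<beta> \<longleftrightarrow> \<beta> - \<alpha> \<in> pos_sums \<Phi> \<Delta>"

definition hessenberg_set :: "'a::euclidean_space set \<Rightarrow> 'a set \<Rightarrow> 'a set \<Rightarrow> bool" where
  "hessenberg_set \<Phi> \<Delta> h \<longleftrightarrow> h \<subseteq> pos_roots \<Phi> \<Delta> \<and>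
     (\<forall>\<beta>\<in>pos_roots \<Phi> \<Delta> - h. \<forall>\<alpha>\<in>pos_roots \<Phi> \<Delta>.
        root_prec \<Phi> \<Delta> \<beta> \<alpha> \<longrightarrow> \<alpha> \<in> pos_roots \<Phi> \<Delta> - h)"

inductive_set weyl :: "'a::euclidean_space set \<Rightarrow> ('a \<Rightarrow> 'a) set" for \<Delta> where
  id: "id \<in> weyl \<Delta>"
| step: "w \<in> weyl \<Delta> \<Longrightarrow> \<alpha> \<in> \<Delta> \<Longrightarrow> refl \<alpha> \<circ> w \<in> weyl \<Delta>"

text \<open>The polynomial ring R[\<Delta>] realised as the ring of real polynomial functions on V
  generated by the linear forms v \<mapsto> (\<alpha>, v), \<alpha> \<in> \<Delta>. Since \<Delta> is linearly independent
  and R is infinite, this is isomorphic to R[\<alpha>_1,...,\<alpha>_k].\<close>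
inductive_set poly_ring :: "'a::euclidean_space set \<Rightarrow> ('a \<Rightarrow> real) set" for \<Delta> where
  const: "(\<lambda>v. c) \<in> poly_ring \<Delta>"
| var: "\<alpha> \<in> \<Delta> \<Longrightarrow> (\<lambda>v. \<alpha> \<bullet> v) \<in> poly_ring \<Delta>"
| add: "f \<in> poly_ring \<Delta> \<Longrightarrow> g \<in> poly_ring \<Delta> \<Longrightarrow> (\<lambda>v. f v + g v) \<in> poly_ring \<Delta>"
| mult: "f \<in> poly_ring \<Delta> \<Longrightarrow> g \<in> poly_ring \<Delta> \<Longrightarrow> (\<lambda>v. f v * g v) \<in> poly_ring \<Delta>"

definition principal_ideal :: "'a::euclidean_space set \<Rightarrow> 'a \<Rightarrow> ('a \<Rightarrow> real) set" where
  "principal_ideal \<Delta> \<alpha> = {f. \<exists>g\<in>poly_ring \<Delta>. f = (\<lambda>v. (\<alpha> \<bullet> v) * g v)}"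

definition hess_edge :: "'a::euclidean_space set \<Rightarrow> 'a set \<Rightarrow> 'a set \<Rightarrow>
    ('a \<Rightarrow> 'a) \<Rightarrow> ('a \<Rightarrow> 'a) \<Rightarrow> 'a \<Rightarrow> bool" where
  "hess_edge \<Phi> \<Delta> h u w \<alpha> \<longleftrightarrow> u \<in> weyl \<Delta> \<and> \<alpha> \<in> pos_roots \<Phi> \<Delta> \<and>
     w = refl \<alpha> \<circ> u \<and> - (inv w \<alpha>) \<in> h"

text \<open>GKM ring: maps W \<rightarrow> R[\<Delta>] satisfying the edge conditions (values off W are irrelevant).\<close>
definition gkm_ring :: "'a::euclidean_space set \<Rightarrow> 'a set \<Rightarrow> 'a set \<Rightarrow>
    (('a \<Rightarrow> 'a) \<Rightarrow> ('a \<Rightarrow> real)) set" where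
  "gkm_ring \<Phi> \<Delta> h = {P. (\<forall>w\<in>weyl \<Delta>. P w \<in> poly_ring \<Delta>) \<and>
     (\<forall>u w \<alpha>. hess_edge \<Phi> \<Delta> h u w \<alpha> \<longrightarrow> (\<lambda>v. P u v - P w v) \<in> principal_ideal \<Delta> \<alpha>)}"

text \<open>Action of W on polynomial functions: (w f)(v) = f(w^{-1} v), so that w sends the linear
  form of \<alpha> to that of w \<alpha>.\<close>
definition poly_act :: "('a \<Rightarrow> 'a) \<Rightarrow> ('a \<Rightarrow> real) \<Rightarrow> ('a \<Rightarrow> real)" where
  "poly_act w f = (\<lambda>v. f (inv w v))"

definition map_act :: "('a \<Rightarrow> 'a) \<Rightarrow> (('a \<Rightarrow> 'a) \<Rightarrow> ('a \<Rightarrow> real)) \<Rightarrow> (('a \<Rightarrow> 'a) \<Rightarrow> ('a \<Rightarrow> real))" where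
  "map_act w P = (\<lambda>u. poly_act w (P (inv w \<circ> u)))"

end

theory Submission
  imports Defs
begin

text \<open>The Weyl group acts by orthogonal maps, so v s_\<beta> v\<inverse> = s_(v \<beta>), and every reflection
  in a positive root lies in W. Hence left translation by v \<in> W sends the edge u \<rightarrow> s_\<alpha> u to
  an edge between v u and v s_\<alpha> u labelled \<plusminus>v \<alpha>, and leaves the point (s_\<alpha> u)\<inverse> \<alpha>
  tested against h unchanged. Since composing with v\<inverse> maps R[\<Delta>] to itself and the ideal of
  v\<inverse> \<alpha> onto the ideal of \<alpha>, the edge conditions for w \<cdot> P follow from those for P.\<close>

lemma refl_refl [simp]: "refl a (refl a v) = v"
proof (cases "a = 0")
  case False
  then show ?thesis
    by (simp add: refl_def inner_diff_right algebra_simps)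
qed (simp add: refl_def)

lemma inner_refl_refl: "refl a x \<bullet> refl a y = x \<bullet> y"
proof (cases "a = 0")
  case False
  then show ?thesis
    by (simp add: refl_def inner_diff_right inner_diff_left inner_commute[of x a]
        inner_commute[of y a] algebra_simps)
qed (simp add: refl_def)

lemma linear_refl: "linear (refl a)"
  by (rule linearI) (simp_all add: refl_def inner_add_right add_divide_distrib algebra_simps)

lemma orthogonal_transformation_refl: "orthogonal_transformation (refl a)"
  by (simp add: orthogonal_transformation_def linear_refl inner_refl_refl)

lemma inv_refl: "inv (refl a) = refl a"
  by (rule inv_equality) simp_all

lemma refl_uminus: "refl (- a) = refl a"
  by (rule ext) (simp add: refl_def)

lemma refl_self: "refl a a = - a"
  by (cases "a = 0") (simp_all add: refl_def algebra_simps scaleR_2)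

lemma orthogonal_transformation_refl_eq:
  assumes "orthogonal_transformation f"
  shows "f (refl b v) = refl (f b) (f v)"
  using assms
  by (simp add: refl_def orthogonal_transformation_def linear_diff linear_scale)

lemma weyl_orthogonal_transformation: "w \<in> weyl D \<Longrightarrow> orthogonal_transformation w"
proof (induction rule: weyl.induct)
  case (step w a)
  then show ?case using orthogonal_transformation_compose orthogonal_transformation_refl by blast
qed (simp add: id_def)

lemma refl_in_weyl: "a \<in> D \<Longrightarrow> refl a \<in> weyl D"
  using weyl.step[OF weyl.id] by (metis comp_id)

lemma weyl_comp: "w1 \<in> weyl D \<Longrightarrow> w2 \<in> weyl D \<Longrightarrow> w1 \<circ> w2 \<in> weyl D"
  by (induction rule: weyl.induct) (simp_all add: comp_assoc weyl.step)

lemma weyl_inv: "w \<in> weyl D \<Longrightarrow> inv w \<in> weyl D"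
proof (induction rule: weyl.induct)
  case id
  then show ?case by (metis inv_id weyl.id)
next
  case (step w a)
  have "inv (refl a \<circ> w) = inv w \<circ> refl a"
    using o_inv_distrib[OF orthogonal_transformation_bij orthogonal_transformation_bij]
      weyl_orthogonal_transformation[OF step.hyps(1)] orthogonal_transformation_refl
    by (metis inv_refl)
  then show ?case using step.IH refl_in_weyl[OF step.hyps(2)] weyl_comp by metis
qed

lemma poly_ring_comp_refl: "f \<in> poly_ring D \<Longrightarrow> a \<in> D \<Longrightarrow> f \<circ> refl a \<in> poly_ring D"
proof (induction rule: poly_ring.induct)
  case (const c)
  then show ?case by (simp add: o_def poly_ring.const)
next
  case (var b)
  define t where "t = - (2 * (a \<bullet> b) / (a \<bullet> a))"
  have "(\<lambda>v. b \<bullet> v) \<circ> refl a = (\<lambda>v. b \<bullet> v + t * (a \<bullet> v))"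
    by (rule ext) (simp add: refl_def t_def inner_diff_right inner_commute[of a b] algebra_simps)
  moreover have "(\<lambda>v. b \<bullet> v + t * (a \<bullet> v)) \<in> poly_ring D"
    using var by (intro poly_ring.add poly_ring.mult poly_ring.const poly_ring.var)
  ultimately show ?case by simp
next
  case (add f g)
  then show ?case using poly_ring.add[OF add.IH] by (simp add: o_def)
next
  case (mult f g)
  then show ?case using poly_ring.mult[OF mult.IH] by (simp add: o_def)
qed

lemma poly_ring_comp_weyl: "w \<in> weyl D \<Longrightarrow> f \<in> poly_ring D \<Longrightarrow> f \<circ> w \<in> poly_ring D"
proof (induction arbitrary: f rule: weyl.induct)
  case (step w a)
  then show ?case using poly_ring_comp_refl by (metis comp_assoc)
qed simp

lemma principal_ideal_comp_weyl:
  assumes "w \<in> weyl D" "f \<in> principal_ideal D (w \<alpha>)"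
  shows "f \<circ> w \<in> principal_ideal D \<alpha>"
proof -
  obtain g where g: "g \<in> poly_ring D" and f: "f = (\<lambda>v. (w \<alpha> \<bullet> v) * g v)"
    using assms(2) unfolding principal_ideal_def by blast
  have "f \<circ> w = (\<lambda>v. (\<alpha> \<bullet> v) * (g \<circ> w) v)"
    using weyl_orthogonal_transformation[OF assms(1)]
    by (simp add: f o_def orthogonal_transformation_def)
  then show ?thesis
    unfolding principal_ideal_def
    by (intro CollectI bexI[of _ "g \<circ> w"] poly_ring_comp_weyl[OF assms(1) g])
qed

lemma principal_ideal_uminus:
  assumes "f \<in> principal_ideal D (- \<alpha>)"
  shows "(\<lambda>v. - f v) \<in> principal_ideal D \<alpha>"
proof -
  obtain g where g: "g \<in> poly_ring D" and f: "f = (\<lambda>v. (- \<alpha> \<bullet> v) * g v)"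
    using assms unfolding principal_ideal_def by blast
  then show ?thesis
    unfolding principal_ideal_def by (intro CollectI bexI[of _ g]) simp_all
qed

lemma is_base_coeffs:
  assumes "is_base \<Phi> D" "\<beta> \<in> \<Phi>"
  obtains c :: "'a::euclidean_space \<Rightarrow> int"
  where "\<beta> = (\<Sum>\<alpha>\<in>D. of_int (c \<alpha>) *\<^sub>R \<alpha>)" "(\<forall>\<alpha>\<in>D. c \<alpha> \<ge> 0) \<or> (\<forall>\<alpha>\<in>D. c \<alpha> \<le> 0)"
proof -
  have "\<forall>\<beta>\<in>\<Phi>. \<exists>c::'a \<Rightarrow> int. \<beta> = (\<Sum>\<alpha>\<in>D. of_int (c \<alpha>) *\<^sub>R \<alpha>) \<and>
      ((\<forall>\<alpha>\<in>D. c \<alpha> \<ge> 0) \<or> (\<forall>\<alpha>\<in>D. c \<alpha> \<le> 0))"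
    using assms(1) unfolding is_base_def by (elim conjE)
  with assms(2) that show ?thesis by blast
qed

lemma independent_coeffs_eq:
  fixes D :: "'a::euclidean_space set"
  assumes "independent D" "a \<in> D"
    and "(\<Sum>\<alpha>\<in>D. of_int (c \<alpha>) *\<^sub>R \<alpha>) = (\<Sum>\<alpha>\<in>D. of_int (d \<alpha>) *\<^sub>R \<alpha>)"
  shows "c a = d a"
proof -
  have fin: "finite D" using assms(1) by (rule finiteI_independent)
  have no_dep: "\<not> (\<exists>u. (\<exists>v\<in>D. u v \<noteq> 0) \<and> (\<Sum>v\<in>D. u v *\<^sub>R v) = 0)"
    using assms(1) dependent_finite[OF fin] by simp
  have sum0: "(\<Sum>v\<in>D. real_of_int (c v - d v) *\<^sub>R v) = 0"
    using assms(3) by (simp add: scaleR_diff_left sum_subtractf)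
  show ?thesis
  proof (rule ccontr)
    assume "c a \<noteq> d a"
    with sum0 assms(2) have "(\<exists>v\<in>D. real_of_int (c v - d v) \<noteq> 0) \<and>
        (\<Sum>v\<in>D. real_of_int (c v - d v) *\<^sub>R v) = 0"
      by auto
    then have "\<exists>u. (\<exists>v\<in>D. u v \<noteq> 0) \<and> (\<Sum>v\<in>D. u v *\<^sub>R v) = 0"
      by (rule exI[where x = "\<lambda>v. real_of_int (c v - d v)"])
    with no_dep show False ..
  qed
qed

lemma root_nonzero: "root_system \<Phi> \<Longrightarrow> \<beta> \<in> \<Phi> \<Longrightarrow> \<beta> \<noteq> 0"
  unfolding root_system_def by blast

lemma root_refl_closed: "root_system \<Phi> \<Longrightarrow> \<alpha> \<in> \<Phi> \<Longrightarrow> \<beta> \<in> \<Phi> \<Longrightarrow> refl \<alpha> \<beta> \<in> \<Phi>"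
  unfolding root_system_def by (metis imageI)

lemma root_uminus: "root_system \<Phi> \<Longrightarrow> \<beta> \<in> \<Phi> \<Longrightarrow> - \<beta> \<in> \<Phi>"
  using root_refl_closed refl_self by metis

lemma root_cartan_int:
  "root_system \<Phi> \<Longrightarrow> \<alpha> \<in> \<Phi> \<Longrightarrow> \<beta> \<in> \<Phi> \<Longrightarrow> 2 * (\<alpha> \<bullet> \<beta>) / (\<alpha> \<bullet> \<alpha>) \<in> \<int>"
  unfolding root_system_def by blast

lemma root_multiple: "root_system \<Phi> \<Longrightarrow> \<alpha> \<in> \<Phi> \<Longrightarrow> c *\<^sub>R \<alpha> \<in> \<Phi> \<Longrightarrow> c = 1 \<or> c = -1"
  unfolding root_system_def by blast

lemma weyl_root_closed:
  assumes "root_system \<Phi>" "D \<subseteq> \<Phi>" "w \<in> weyl D" "x \<in> \<Phi>"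
  shows "w x \<in> \<Phi>"
  using assms(3,4)
proof (induction arbitrary: x rule: weyl.induct)
  case (step w a)
  then show ?case using root_refl_closed[OF assms(1)] assms(2) by auto
qed simp

lemma root_pos_or_uminus_pos:
  assumes "root_system \<Phi>" "is_base \<Phi> D" "\<beta> \<in> \<Phi>"
  shows "\<beta> \<in> pos_roots \<Phi> D \<or> - \<beta> \<in> pos_roots \<Phi> D"
proof -
  obtain c where c: "\<beta> = (\<Sum>\<alpha>\<in>D. of_int (c \<alpha>) *\<^sub>R \<alpha>)"
    and sign: "(\<forall>\<alpha>\<in>D. c \<alpha> \<ge> 0) \<or> (\<forall>\<alpha>\<in>D. c \<alpha> \<le> 0)"
    using is_base_coeffs[OF assms(2,3)] .
  from sign show ?thesis
  proof
    assume "\<forall>\<alpha>\<in>D. c \<alpha> \<ge> 0"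
    then show ?thesis using c assms(3) unfolding pos_roots_def by blast
  next
    assume "\<forall>\<alpha>\<in>D. c \<alpha> \<le> 0"
    moreover have "- \<beta> = (\<Sum>\<alpha>\<in>D. of_int (- c \<alpha>) *\<^sub>R \<alpha>)"
      using c by (simp add: sum_negf)
    ultimately have "- \<beta> \<in> pos_roots \<Phi> D"
      using root_uminus[OF assms(1,3)] unfolding pos_roots_def
      by (intro CollectI conjI exI[of _ "\<lambda>\<alpha>. - c \<alpha>"]) auto
    then show ?thesis ..
  qed
qed

lemma exists_simple_root_inner_pos:
  fixes D :: "'a::real_inner set"
  assumes "\<beta> \<noteq> 0" "\<beta> = (\<Sum>\<alpha>\<in>D. of_int (c \<alpha>) *\<^sub>R \<alpha>)" "\<forall>\<alpha>\<in>D. c \<alpha> \<ge> 0"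
  obtains a where "a \<in> D" "a \<bullet> \<beta> > 0"
proof (rule ccontr)
  assume "\<not> thesis"
  with that have "\<forall>a\<in>D. a \<bullet> \<beta> \<le> 0" by force
  then have "(\<Sum>\<alpha>\<in>D. of_int (c \<alpha>) * (\<alpha> \<bullet> \<beta>)) \<le> 0"
    using assms(3) by (intro sum_nonpos) (simp add: mult_nonneg_nonpos)
  moreover have "\<beta> \<bullet> \<beta> = (\<Sum>\<alpha>\<in>D. of_int (c \<alpha>) * (\<alpha> \<bullet> \<beta>))"
    by (subst (1) assms(2)) (simp add: inner_sum_left)
  ultimately show False using assms(1) inner_gt_zero_iff[of \<beta>] by linarith
qed

text \<open>Only the coefficient at a changes; were the reflected root negative, all other
  coefficients of \<beta> would vanish and \<beta> would be a positive multiple of a, hence a.\<close>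

lemma refl_simple_root_coeffs_nonneg:
  assumes rs: "root_system \<Phi>" and base: "is_base \<Phi> D" and "a \<in> D" "\<beta> \<in> \<Phi>" "\<beta> \<noteq> a"
    and c: "\<beta> = (\<Sum>\<alpha>\<in>D. of_int (c \<alpha>) *\<^sub>R \<alpha>)" "\<forall>\<alpha>\<in>D. c \<alpha> \<ge> 0"
    and c': "refl a \<beta> = (\<Sum>\<alpha>\<in>D. of_int (c' \<alpha>) *\<^sub>R \<alpha>)" "\<forall>x\<in>D - {a}. c' x = c x"
  shows "\<forall>x\<in>D. c' x \<ge> 0"
proof -
  have D: "D \<subseteq> \<Phi>" "independent D" using base unfolding is_base_def by auto
  have "refl a \<beta> \<in> \<Phi>"
    using root_refl_closed[OF rs] \<open>a \<in> D\<close> \<open>\<beta> \<in> \<Phi>\<close> D(1) by blast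
  then obtain d where d: "refl a \<beta> = (\<Sum>\<alpha>\<in>D. of_int (d \<alpha>) *\<^sub>R \<alpha>)"
    and sign: "(\<forall>\<alpha>\<in>D. d \<alpha> \<ge> 0) \<or> (\<forall>\<alpha>\<in>D. d \<alpha> \<le> 0)"
    using is_base_coeffs[OF base] by blast
  have dc': "d x = c' x" if "x \<in> D" for x
    using independent_coeffs_eq[OF D(2) that] d c'(1) by metis
  show ?thesis
  proof (cases "\<forall>\<alpha>\<in>D. d \<alpha> \<ge> 0")
    case True
    then show ?thesis using dc' by auto
  next
    case False
    with sign have "\<forall>\<alpha>\<in>D. d \<alpha> \<le> 0" by blast
    with dc' c'(2) c(2) have vanish: "\<forall>x\<in>D - {a}. c x = 0"
      by (metis Diff_iff order_antisym)
    have "\<beta> = (\<Sum>\<alpha>\<in>insert a (D - {a}). of_int (c \<alpha>) *\<^sub>R \<alpha>)"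
      using c(1) \<open>a \<in> D\<close> by (simp add: insert_absorb)
    also have "\<dots> = of_int (c a) *\<^sub>R a"
      using vanish finiteI_independent[OF D(2)] by (subst sum.insert) auto
    finally have \<beta>: "\<beta> = of_int (c a) *\<^sub>R a" .
    then have "real_of_int (c a) = 1 \<or> real_of_int (c a) = -1"
      using root_multiple[OF rs] \<open>\<beta> \<in> \<Phi>\<close> \<open>a \<in> D\<close> D(1) by blast
    moreover have "c a \<ge> 0" using c(2) \<open>a \<in> D\<close> by blast
    ultimately have "c a = 1" by linarith
    with \<beta> \<open>\<beta> \<noteq> a\<close> show ?thesis by simp
  qed
qed

text \<open>Induction on the height: for a positive root \<beta> that is not simple pick a simple root
  \<alpha> with (\<alpha>, \<beta>) > 0; then \<beta>' = s_\<alpha>(\<beta>) is a positive root of smaller height and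
  s_\<beta> = s_\<alpha> s_\<beta>' s_\<alpha>.\<close>

lemma refl_pos_root_in_weyl:
  assumes rs: "root_system \<Phi>" and base: "is_base \<Phi> D" and "\<beta> \<in> pos_roots \<Phi> D"
  shows "refl \<beta> \<in> weyl D"
proof -
  have D: "D \<subseteq> \<Phi>" "finite D"
    using base finiteI_independent unfolding is_base_def by auto
  obtain c where "\<beta> \<in> \<Phi>" "\<beta> = (\<Sum>\<alpha>\<in>D. of_int (c \<alpha>) *\<^sub>R \<alpha>)" "\<forall>\<alpha>\<in>D. c \<alpha> \<ge> 0"
    using assms(3) unfolding pos_roots_def by blast
  then show ?thesis
  proof (induction "nat (\<Sum>\<alpha>\<in>D. c \<alpha>)" arbitrary: \<beta> c rule: less_induct)
    case less
    have "\<beta> \<noteq> 0" using root_nonzero[OF rs less.prems(1)] .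
    then obtain a where a: "a \<in> D" "a \<bullet> \<beta> > 0"
      using exists_simple_root_inner_pos less.prems(2,3) by blast
    show ?case
    proof (cases "\<beta> = a")
      case True
      then show ?thesis using refl_in_weyl[OF a(1)] by simp
    next
      case False
      have "a \<in> \<Phi>" using a(1) D(1) by blast
      then obtain k :: int where k: "2 * (a \<bullet> \<beta>) / (a \<bullet> a) = of_int k"
        using root_cartan_int[OF rs _ less.prems(1)] by (metis Ints_cases)
      have "a \<bullet> a > 0" using root_nonzero[OF rs \<open>a \<in> \<Phi>\<close>] by simp
      then have "2 * (a \<bullet> \<beta>) / (a \<bullet> a) > 0" using a(2) by simp
      then have "k \<ge> 1" unfolding k by simp
      define c' where "c' = (\<lambda>x. c x - (if x = a then k else 0))"
      have "refl a \<beta> = \<beta> - of_int k *\<^sub>R a"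
        unfolding refl_def k ..
      also have "\<dots> = (\<Sum>\<alpha>\<in>D. of_int (c' \<alpha>) *\<^sub>R \<alpha>)"
        unfolding less.prems(2) c'_def using D(2) a(1)
        by (simp add: scaleR_diff_left sum_subtractf if_distrib[of real_of_int]
            if_distrib[of "\<lambda>x. x *\<^sub>R _"] sum.delta cong: if_cong)
      finally have c'_sum: "refl a \<beta> = (\<Sum>\<alpha>\<in>D. of_int (c' \<alpha>) *\<^sub>R \<alpha>)" .
      have c'_nonneg: "\<forall>x\<in>D. c' x \<ge> 0"
        using refl_simple_root_coeffs_nonneg[OF rs base a(1) less.prems(1) False
            less.prems(2,3) c'_sum] by (simp add: c'_def)
      have "(\<Sum>\<alpha>\<in>D. c' \<alpha>) = (\<Sum>\<alpha>\<in>D. c \<alpha>) - k"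
        unfolding c'_def using D(2) a(1) by (simp add: sum_subtractf sum.delta)
      moreover have "(\<Sum>\<alpha>\<in>D. c' \<alpha>) \<ge> 0" using c'_nonneg by (simp add: sum_nonneg)
      ultimately have "nat (\<Sum>\<alpha>\<in>D. c' \<alpha>) < nat (\<Sum>\<alpha>\<in>D. c \<alpha>)" using \<open>k \<ge> 1\<close> by linarith
      moreover have "refl a \<beta> \<in> \<Phi>"
        using root_refl_closed[OF rs \<open>a \<in> \<Phi>\<close> less.prems(1)] .
      ultimately have "refl (refl a \<beta>) \<in> weyl D"
        using less.hyps c'_sum c'_nonneg by blast
      moreover have "refl \<beta> = refl a \<circ> refl (refl a \<beta>) \<circ> refl a"
        using orthogonal_transformation_refl_eq[OF orthogonal_transformation_refl, of a]
        by (intro ext) (metis comp_apply refl_refl)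
      ultimately show ?thesis using refl_in_weyl[OF a(1)] by (simp add: weyl_comp)
    qed
  qed
qed

lemma hess_edge_target_in_weyl:
  "root_system \<Phi> \<Longrightarrow> is_base \<Phi> D \<Longrightarrow> hess_edge \<Phi> D h u w \<alpha> \<Longrightarrow> w \<in> weyl D"
  unfolding hess_edge_def by (auto intro: weyl_comp refl_pos_root_in_weyl)

lemma hess_edge_weyl_translate:
  assumes rs: "root_system \<Phi>" and base: "is_base \<Phi> D"
    and e: "hess_edge \<Phi> D h u w \<alpha>" and v: "v \<in> weyl D"
  shows "hess_edge \<Phi> D h (v \<circ> u) (v \<circ> w) (v \<alpha>) \<or>
    hess_edge \<Phi> D h (v \<circ> w) (v \<circ> u) (- v \<alpha>)"
proof -
  have u: "u \<in> weyl D" and \<alpha>: "\<alpha> \<in> pos_roots \<Phi> D" and w: "w = refl \<alpha> \<circ> u"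
    and h: "- inv w \<alpha> \<in> h"
    using e unfolding hess_edge_def by auto
  have v_orth: "orthogonal_transformation v" using weyl_orthogonal_transformation[OF v] .
  have vu: "v \<circ> u \<in> weyl D" and vw: "v \<circ> w \<in> weyl D"
    using weyl_comp[OF v] u hess_edge_target_in_weyl[OF rs base e] by auto
  have bij_u: "bij u" and bij_w: "bij w" and bij_v: "bij v"
    using u hess_edge_target_in_weyl[OF rs base e] v
    by (simp_all add: weyl_orthogonal_transformation orthogonal_transformation_bij)
  have vw_eq: "v \<circ> w = refl (v \<alpha>) \<circ> (v \<circ> u)"
    using orthogonal_transformation_refl_eq[OF v_orth] by (auto simp: w)
  have inv_vw: "inv (v \<circ> w) (v \<alpha>) = inv w \<alpha>"
    using bij_v bij_w by (simp add: o_inv_distrib bij_is_inj)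
  have inv_vu: "inv (v \<circ> u) (- v \<alpha>) = inv w \<alpha>"
  proof -
    have "u (inv w \<alpha>) = - \<alpha>"
      using bij_w by (metis bij_inv_eq_iff comp_apply refl_refl refl_self w)
    then have "(v \<circ> u) (inv w \<alpha>) = - v \<alpha>"
      using linear_neg[OF orthogonal_transformation_linear[OF v_orth]] by simp
    then show ?thesis using bij_comp[OF bij_u bij_v] by (metis bij_is_inj inv_f_eq)
  qed
  have "\<alpha> \<in> \<Phi>" "D \<subseteq> \<Phi>" using \<alpha> base unfolding pos_roots_def is_base_def by auto
  then have "v \<alpha> \<in> \<Phi>" using weyl_root_closed[OF rs _ v] by blast
  then consider "v \<alpha> \<in> pos_roots \<Phi> D" | "- v \<alpha> \<in> pos_roots \<Phi> D"
    using root_pos_or_uminus_pos[OF rs base] by blast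
  then show ?thesis
  proof cases
    case 1
    then show ?thesis using vu vw_eq inv_vw h unfolding hess_edge_def by auto
  next
    case 2
    have "v \<circ> u = refl (- v \<alpha>) \<circ> (v \<circ> w)"
      by (rule ext) (simp add: vw_eq refl_uminus)
    then show ?thesis using 2 vw inv_vu h unfolding hess_edge_def by auto
  qed
qed

lemma map_act_eq: "map_act w P u = P (inv w \<circ> u) \<circ> inv w"
  by (simp add: map_act_def poly_act_def o_def)

theorem proposition2p3:
  fixes \<Phi> \<Delta> h :: "'a::euclidean_space set"
    and P :: "('a \<Rightarrow> 'a) \<Rightarrow> ('a \<Rightarrow> real)"
    and w :: "'a \<Rightarrow> 'a"
  assumes "root_system \<Phi>"
    and "is_base \<Phi> \<Delta>"
    and "hessenberg_set \<Phi> \<Delta> h"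
    and "P \<in> gkm_ring \<Phi> \<Delta> h"
    and "w \<in> weyl \<Delta>"
  shows "map_act w P \<in> gkm_ring \<Phi> \<Delta> h"
  unfolding gkm_ring_def
proof (intro CollectI conjI ballI allI impI)
  have poly: "\<forall>u\<in>weyl \<Delta>. P u \<in> poly_ring \<Delta>"
    and edge: "\<And>u u' \<alpha>. hess_edge \<Phi> \<Delta> h u u' \<alpha> \<Longrightarrow>
      (\<lambda>v. P u v - P u' v) \<in> principal_ideal \<Delta> \<alpha>"
    using assms(4) unfolding gkm_ring_def by auto
  have w': "inv w \<in> weyl \<Delta>" using weyl_inv[OF assms(5)] .
  fix u
  show "u \<in> weyl \<Delta> \<Longrightarrow> map_act w P u \<in> poly_ring \<Delta>"
    using poly poly_ring_comp_weyl[OF w'] weyl_comp[OF w'] by (simp add: map_act_eq)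
  fix u' \<alpha>
  assume "hess_edge \<Phi> \<Delta> h u u' \<alpha>"
  then consider "hess_edge \<Phi> \<Delta> h (inv w \<circ> u) (inv w \<circ> u') (inv w \<alpha>)"
    | "hess_edge \<Phi> \<Delta> h (inv w \<circ> u') (inv w \<circ> u) (- inv w \<alpha>)"
    using hess_edge_weyl_translate[OF assms(1,2) _ w'] by blast
  then have "(\<lambda>v. P (inv w \<circ> u) v - P (inv w \<circ> u') v) \<in> principal_ideal \<Delta> (inv w \<alpha>)"
  proof cases
    case 2
    then show ?thesis using principal_ideal_uminus[OF edge] by simp
  qed (rule edge)
  from principal_ideal_comp_weyl[OF w' this]
  show "(\<lambda>v. map_act w P u v - map_act w P u' v) \<in> principal_ideal \<Delta> \<alpha>"
    by (simp add: map_act_eq o_def)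
qed

end
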